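(* Let $n\ge5$ be odd and $M$ an $n\times n$ HW-matrix. There is no spin$^c$ set $S$ for $M$ with $|S|=n$.
   Context: $\mathcal S=\{0,1,2,3\}$ is the Klein four-group ($\mathbb Z_2$-vector space) with $x+x=0$, $1+2=3$, $1+3=2$, $2+3=1$. $\mathcal P_n$ is the power set of $\{1,\dots,n\}$ (addition = symmetric difference, product = intersection); $|U|_2=|U|\bmod 2$; $J_M(U)=\{j:\sum_{i\in U}M_{ij}=1\}$. $M$ is an HW-matrix if it has $1$ on the diagonal and $2$ or $3$ off the diagonal, all column sums are $0$, and $J_M(U)\ne\emptyset$ for all $U\ne\emptyset,\{1,\dots,n\}$. $S\in\mathcal P_n$ is a spin$^c$ set for $M$ if $|(J_M(U)+U)\cap S|_2=\binom{|U|}2\bmod 2$ for all $U\in\mathcal P_n$. *)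

theory Defs
  imports Main "HOL-Library.Z2" "HOL-Library.Product_Plus"
begin

text \<open>The Klein four-group S = {0,1,2,3} as the Z2-vector space bit x bit:
  0 = (0,0), 1 = (1,0), 2 = (0,1), 3 = (1,1); addition is componentwise,
  so x + x = 0, 1 + 2 = 3, 1 + 3 = 2, 2 + 3 = 1.\<close>
type_synonym klein = "bit \<times> bit"

definition k0 :: klein where "k0 = (0, 0)"
definition k1 :: klein where "k1 = (1, 0)"
definition k2 :: klein where "k2 = (0, 1)"
definition k3 :: klein where "k3 = (1, 1)"

text \<open>An n x n matrix with entries in S, indexed by {1..n}.\<close>
type_synonym kmatrix = "nat \<Rightarrow> nat \<Rightarrow> klein"

definition symdiff :: "'a set \<Rightarrow> 'a set \<Rightarrow> 'a set" where
  "symdiff A B = (A - B) \<union> (B - A)"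

definition J :: "kmatrix \<Rightarrow> nat \<Rightarrow> nat set \<Rightarrow> nat set" where
  "J M n U = {j \<in> {1..n}. (\<Sum>i\<in>U. M i j) = k1}"

definition HW_matrix :: "nat \<Rightarrow> kmatrix \<Rightarrow> bool" where
  "HW_matrix n M \<longleftrightarrow>
     (\<forall>i\<in>{1..n}. M i i = k1) \<and>
     (\<forall>i\<in>{1..n}. \<forall>j\<in>{1..n}. i \<noteq> j \<longrightarrow> M i j = k2 \<or> M i j = k3) \<and>
     (\<forall>j\<in>{1..n}. (\<Sum>i\<in>{1..n}. M i j) = k0) \<and>
     (\<forall>U. U \<subseteq> {1..n} \<and> U \<noteq> {} \<and> U \<noteq> {1..n} \<longrightarrow> J M n U \<noteq> {})"

definition spinc_set :: "nat \<Rightarrow> kmatrix \<Rightarrow> nat set \<Rightarrow> bool" where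
  "spinc_set n M S \<longleftrightarrow> S \<subseteq> {1..n} \<and>
     (\<forall>U. U \<subseteq> {1..n} \<longrightarrow>
        card (symdiff (J M n U) U \<inter> S) mod 2 = (card U choose 2) mod 2)"

end

theory Submission
  imports Defs
begin

text \<open>
  A spin^c set of size n is all of {1..n}, so for every triple U = {i,k,l} the set U - J(U) has
  odd size. As J(U) \<subseteq> U and J(U) \<noteq> {}, |J(U)| = 2: in exactly one column m \<in> U the two
  entries of U - {m} differ. First, among the three pairs of a triple an
  odd number is asymmetric (M i k \<noteq> M k i), so asymmetry is transitive and every triple contains
  an asymmetric pair: {1..n} splits into at most two cliques of pairwise asymmetric indices.
  Second, inside such a clique the number of 3's in column j strictly increases along every entry
  M i j = 3; this number is odd (column sums vanish) and below n, so a clique has at most n div 2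
  elements. Hence n \<le> 2 (n div 2), impossible for odd n.
\<close>

definition column_threes :: "kmatrix \<Rightarrow> nat \<Rightarrow> nat \<Rightarrow> nat set" where
  "column_threes M n j = {i \<in> {1..n}. i \<noteq> j \<and> M i j = k3}"

definition asym :: "kmatrix \<Rightarrow> nat \<Rightarrow> nat \<Rightarrow> bool" where
  "asym M i k \<longleftrightarrow> M i k \<noteq> M k i"

definition asym_clique :: "kmatrix \<Rightarrow> nat set \<Rightarrow> bool" where
  "asym_clique M C \<longleftrightarrow> (\<forall>a\<in>C. \<forall>b\<in>C. a \<noteq> b \<longrightarrow> asym M a b)"

lemma klein_distinct [simp]: "k1 \<noteq> k2" "k1 \<noteq> k3" "k2 \<noteq> k3" "k2 \<noteq> k1" "k3 \<noteq> k1" "k3 \<noteq> k2"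
  by (simp_all add: k1_def k2_def k3_def)

lemma klein_add_eq_0_iff: "(x::klein) + y = 0 \<longleftrightarrow> x = y"
proof -
  have "(a::bit) + b = 0 \<longleftrightarrow> a = b" for a b by (cases a; cases b) auto
  then show ?thesis by (cases x; cases y) (simp add: zero_prod_def)
qed

lemma of_nat_bit_eq_0_iff: "(of_nat m :: bit) = 0 \<longleftrightarrow> even m"
  by (metis bit_numeral_even dvd_0_left_iff even_of_nat)

lemma HW_matrix_diag: "HW_matrix n M \<Longrightarrow> i \<in> {1..n} \<Longrightarrow> M i i = k1"
  unfolding HW_matrix_def by blast

lemma HW_matrix_off_diag:
  "HW_matrix n M \<Longrightarrow> i \<in> {1..n} \<Longrightarrow> j \<in> {1..n} \<Longrightarrow> i \<noteq> j \<Longrightarrow> M i j = k2 \<or> M i j = k3"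
  unfolding HW_matrix_def by blast

lemma odd_card_column_threes:
  assumes hw: "HW_matrix n M" and j: "j \<in> {1..n}"
  shows "odd (card (column_threes M n j))"
proof -
  let ?T = "insert j (column_threes M n j)"
  have T: "?T \<subseteq> {1..n}" using j by (auto simp: column_threes_def)
  have "fst (M i j) = of_bool (i \<in> ?T)" if i: "i \<in> {1..n}" for i
    using i HW_matrix_diag[OF hw i] HW_matrix_off_diag[OF hw i j]
    by (cases "i = j") (auto simp: column_threes_def k1_def k2_def k3_def)
  then have "fst (\<Sum>i\<in>{1..n}. M i j) = (\<Sum>i\<in>{1..n}. of_bool (i \<in> ?T))"
    by (simp add: fst_sum)
  also have "\<dots> = of_nat (card ?T)"
  proof -
    have "{1..n} \<inter> {i. i \<in> ?T} = ?T" using T by blast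
    then show ?thesis by (metis finite_atLeastAtMost sum_of_bool_eq)
  qed
  finally have "fst (\<Sum>i\<in>{1..n}. M i j) = of_nat (card ?T)" .
  moreover have "(\<Sum>i\<in>{1..n}. M i j) = k0"
    using hw j unfolding HW_matrix_def by blast
  moreover have "j \<notin> column_threes M n j" "finite (column_threes M n j)"
    by (auto simp: column_threes_def)
  ultimately show ?thesis by (simp add: k0_def of_nat_bit_eq_0_iff)
qed

text \<open>Off the diagonal the second coordinate is always 1, so a column sum over an odd set
  avoiding the column index has second coordinate 1 and cannot be k1.\<close>
lemma J_subset_if_odd:
  assumes hw: "HW_matrix n M" and U: "U \<subseteq> {1..n}" "odd (card U)"
  shows "J M n U \<subseteq> U"
proof
  fix j assume jJ: "j \<in> J M n U"
  then have j: "j \<in> {1..n}" by (simp add: J_def)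
  show "j \<in> U"
  proof (rule ccontr)
    assume "j \<notin> U"
    then have "snd (M i j) = 1" if "i \<in> U" for i
    proof -
      have "i \<in> {1..n}" "i \<noteq> j" using that U \<open>j \<notin> U\<close> by auto
      then show ?thesis using HW_matrix_off_diag[OF hw _ j, of i] by (auto simp: k2_def k3_def)
    qed
    then have "snd (\<Sum>i\<in>U. M i j) = of_nat (card U)" by (simp add: snd_sum)
    with U(2) jJ show False by (simp add: J_def k1_def of_nat_bit_eq_0_iff)
  qed
qed

lemma mem_J_triple:
  assumes hw: "HW_matrix n M" and "i \<in> {1..n}" "k \<in> {1..n}" "l \<in> {1..n}"
    and "i \<noteq> k" "i \<noteq> l" "k \<noteq> l"
  shows "i \<in> J M n {i, k, l} \<longleftrightarrow> M k i = M l i"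
proof -
  have "(\<Sum>m\<in>{i, k, l}. M m i) = k1 + (M k i + M l i)"
    using assms HW_matrix_diag[OF hw] by simp
  then show ?thesis
    using assms by (simp add: J_def klein_add_eq_0_iff)
qed

lemma klein_triangle:
  assumes "ki \<in> {k2, k3}" "li \<in> {k2, k3}" "ik \<in> {k2, k3}"
    and "lk \<in> {k2, k3}" "il \<in> {k2, k3}" "kl \<in> {k2, k3}"
    and "of_bool (ki = li) + of_bool (ik = lk) + of_bool (il = kl) = (2::nat)"
  shows "ik \<noteq> ki \<longleftrightarrow> (kl \<noteq> lk \<longleftrightarrow> il \<noteq> li)"
  using assms by (auto simp: k2_def k3_def)

locale full_spinc_HW =
  fixes n :: nat and M :: kmatrix
  assumes HW: "HW_matrix n M"
    and spinc: "spinc_set n M {1..n}"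
    and four_le: "4 \<le> n"
begin

lemma card_J_triple:
  assumes U: "{i, k, l} \<subseteq> {1..n}" "card {i, k, l} = 3"
  shows "card (J M n {i, k, l}) = 2"
proof -
  let ?U = "{i, k, l}"
  have sub: "J M n ?U \<subseteq> ?U"
    using J_subset_if_odd[OF HW U(1)] U(2) by simp
  have "?U \<noteq> {1..n}" using U(2) four_le by auto
  then have "J M n ?U \<noteq> {}"
    using HW U unfolding HW_matrix_def by (metis card.empty zero_neq_numeral)
  then have pos: "card (J M n ?U) > 0" by (simp add: card_gt_0_iff finite_subset[OF sub])
  have "symdiff (J M n ?U) ?U \<inter> {1..n} = ?U - J M n ?U"
    using sub U(1) by (auto simp: symdiff_def)
  moreover have "card (symdiff (J M n ?U) ?U \<inter> {1..n}) mod 2 = (card ?U choose 2) mod 2"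
    using spinc U(1) unfolding spinc_set_def by blast
  ultimately have "odd (card (?U - J M n ?U))"
    using U(2) by (simp add: choose_two odd_iff_mod_2_eq_one)
  moreover have "card (?U - J M n ?U) = 3 - card (J M n ?U)"
    using sub U(2) by (simp add: card_Diff_subset finite_subset)
  moreover have "card (J M n ?U) \<le> 3" using card_mono[OF _ sub] U(2) by simp
  ultimately show ?thesis using pos by (auto simp: numeral_3_eq_3 numeral_2_eq_2 le_Suc_eq)
qed

lemma column_agreements_triple:
  assumes "i \<in> {1..n}" "k \<in> {1..n}" "l \<in> {1..n}" "i \<noteq> k" "i \<noteq> l" "k \<noteq> l"
  shows "of_bool (M k i = M l i) + of_bool (M i k = M l k) + of_bool (M i l = M k l) = (2::nat)"
proof -
  let ?J = "J M n {i, k, l}"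
  have "?J \<subseteq> {i, k, l}"
    using J_subset_if_odd[OF HW, of "{i, k, l}"] assms by simp
  then have "?J = {m. (m = i \<and> i \<in> ?J) \<or> (m = k \<and> k \<in> ?J) \<or> (m = l \<and> l \<in> ?J)}"
    by blast
  also have "card \<dots> = of_bool (i \<in> ?J) + of_bool (k \<in> ?J) + of_bool (l \<in> ?J)"
    using assms by (cases "i \<in> ?J"; cases "k \<in> ?J"; cases "l \<in> ?J") (simp_all add: Collect_disj_eq)
  finally have "card ?J = of_bool (i \<in> ?J) + of_bool (k \<in> ?J) + of_bool (l \<in> ?J)" .
  moreover have "{i, k, l} = {k, i, l}" "{i, k, l} = {l, i, k}" by auto
  ultimately show ?thesis
    using card_J_triple[of i k l] assms
      mem_J_triple[OF HW, of i k l] mem_J_triple[OF HW, of k i l] mem_J_triple[OF HW, of l i k]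
    by auto
qed

lemma asym_triangle:
  assumes "i \<in> {1..n}" "k \<in> {1..n}" "l \<in> {1..n}" "i \<noteq> k" "i \<noteq> l" "k \<noteq> l"
  shows "asym M i k \<longleftrightarrow> (asym M k l \<longleftrightarrow> asym M i l)"
proof -
  have "M a b \<in> {k2, k3}" if "a \<in> {i, k, l}" "b \<in> {i, k, l}" "a \<noteq> b" for a b
    using HW_matrix_off_diag[OF HW, of a b] that assms by auto
  then show ?thesis
    unfolding asym_def using assms
    by (intro klein_triangle[OF _ _ _ _ _ _ column_agreements_triple[OF assms]]) auto
qed

lemma column_threes_psubset:
  assumes "i \<in> {1..n}" "j \<in> {1..n}" "i \<noteq> j" "M i j = k3" "M j i = k2"
  shows "column_threes M n i \<subset> column_threes M n j"
proof -
  have "k \<in> column_threes M n j" if "k \<in> column_threes M n i" for k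
  proof -
    have k: "k \<in> {1..n}" "k \<noteq> i" "M k i = k3" using that by (auto simp: column_threes_def)
    then have "k \<noteq> j" using assms(5) by auto
    have "M j i \<noteq> M k i" using assms(5) k(3) by simp
    moreover have "of_bool (M j i = M k i) + of_bool (M i j = M k j) + of_bool (M i k = M j k) = (2::nat)"
      using column_agreements_triple assms k \<open>k \<noteq> j\<close> by blast
    ultimately have "M i j = M k j"
      by (cases "M i j = M k j"; cases "M i k = M j k") simp_all
    then show ?thesis using k \<open>k \<noteq> j\<close> assms(4) by (simp add: column_threes_def)
  qed
  moreover have "i \<in> column_threes M n j" "i \<notin> column_threes M n i"
    using assms by (auto simp: column_threes_def)
  ultimately show ?thesis by blast
qed

lemma card_asym_clique_le:
  assumes C: "C \<subseteq> {1..n}" "asym_clique M C"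
  shows "card C \<le> n div 2"
proof -
  let ?f = "\<lambda>j. card (column_threes M n j)"
  have less: "?f a < ?f b"
    if "a \<in> {1..n}" "b \<in> {1..n}" "a \<noteq> b" "M a b = k3" "M b a = k2" for a b
    using column_threes_psubset[OF that]
    by (rule psubset_card_mono[rotated]) (simp add: column_threes_def)
  have "inj_on ?f C"
  proof (rule inj_onI, rule ccontr)
    fix a b assume ab: "a \<in> C" "b \<in> C" "?f a = ?f b" "a \<noteq> b"
    then have "a \<in> {1..n}" "b \<in> {1..n}" "M a b \<noteq> M b a"
      using C by (auto simp: asym_clique_def asym_def)
    then show False
      using ab less[of a b] less[of b a]
        HW_matrix_off_diag[OF HW, of a b] HW_matrix_off_diag[OF HW, of b a]
      by auto
  qed
  moreover have "?f ` C \<subseteq> (\<lambda>m. 2 * m + 1) ` {..<n div 2}"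
  proof
    fix d assume "d \<in> ?f ` C"
    then obtain j where j: "j \<in> {1..n}" "d = ?f j" using C by auto
    have "column_threes M n j \<subseteq> {1..n} - {j}" by (auto simp: column_threes_def)
    then have "d < n" using j card_mono[of "{1..n} - {j}" "column_threes M n j"] by auto
    moreover have "odd d" using odd_card_column_threes[OF HW j(1)] j(2) by simp
    ultimately show "d \<in> (\<lambda>m. 2 * m + 1) ` {..<n div 2}"
      by (intro image_eqI[of _ _ "d div 2"]) (simp_all, presburger)
  qed
  ultimately have "card C \<le> card ((\<lambda>m. 2 * m + 1) ` {..<n div 2})"
    by (metis card_image card_mono finite_imageI finite_lessThan)
  also have "\<dots> \<le> n div 2" using card_image_le[of "{..<n div 2}"] by simp
  finally show ?thesis .
qed

text \<open>The two cliques: the index 1 with its asymmetric partners, and all other indices.\<close>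
lemma asym_clique_cover:
  obtains A B where "{1..n} = A \<union> B" "A \<subseteq> {1..n}" "B \<subseteq> {1..n}"
    and "asym_clique M A" "asym_clique M B"
proof
  have one: "1 \<in> {1..n}" using four_le by simp
  have sym: "asym M a b = asym M b a" for a b by (auto simp: asym_def)
  show "asym_clique M {i \<in> {1..n}. i = 1 \<or> asym M 1 i}"
    unfolding asym_clique_def using asym_triangle[OF _ one] sym
    by (metis (mono_tags, lifting) mem_Collect_eq)
  show "asym_clique M {i \<in> {1..n}. i \<noteq> 1 \<and> \<not> asym M 1 i}"
    unfolding asym_clique_def using asym_triangle[OF one]
    by (metis (mono_tags, lifting) mem_Collect_eq)
qed auto

end

theorem mainTheorem15:
  fixes n :: nat and M :: kmatrix
  assumes "n \<ge> 5" and "odd n" and "HW_matrix n M"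
  shows "\<not> (\<exists>S. spinc_set n M S \<and> card S = n)"
proof
  assume "\<exists>S. spinc_set n M S \<and> card S = n"
  then obtain S where S: "spinc_set n M S" "card S = n" by blast
  then have "S = {1..n}"
    by (intro card_subset_eq) (auto simp: spinc_set_def)
  with S assms interpret full_spinc_HW n M
    by unfold_locales auto
  obtain A B where AB: "{1..n} = A \<union> B" "A \<subseteq> {1..n}" "B \<subseteq> {1..n}"
    and "asym_clique M A" "asym_clique M B"
    by (rule asym_clique_cover)
  have "n = card (A \<union> B)"
    by (simp flip: AB(1))
  also have "\<dots> \<le> card A + card B"
    by (rule card_Un_le)
  also have "\<dots> \<le> 2 * (n div 2)"
    using card_asym_clique_le[OF AB(2) \<open>asym_clique M A\<close>]
      card_asym_clique_le[OF AB(3) \<open>asym_clique M B\<close>] by simp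
  finally show False
    using assms(1,2) by (simp add: odd_two_times_div_two_nat)
qed

end
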